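(* Let $n\ge2$, $\beta\in\partial\mathbb{D}$, $\{\alpha_j\}_{j=0}^{n-2}\in\mathbb{D}^{n-1}$, and $\rho_0=(1-|\alpha_0|^2)^{1/2}$. Let $C_n,S_n$ be built from $(\{\alpha_j\}_{j=0}^{n-2},\beta)$ and $C_{n-1},S_{n-1}$ from $(\{\alpha_{j+1}\}_{j=0}^{n-3},\beta)$, and define for $m\in\{n-1,n\}$ \[ G_m(z,w)=-i\,\frac{C_m(z)\,wS_m(w)-C_m(w)\,zS_m(z)}{z-w}. \] Then \[ G_n(z,w)=z\rho_0^2G_{n-1}(z,w)-i\rho_0^2\,zS_{n-1}(z)C_{n-1}(w). \]
   Context: For Verblunsky coefficients in $\mathbb{D}$, $\Phi_0=1$, $\Phi_{k+1}(z)=z\Phi_k(z)-\bar\alpha_k\Phi_k^*(z)$ with $\Phi_k^*(z)=z^k\overline{\Phi_k(1/\bar z)}$; $\Psi_k$ satisfies the same recursion with $\alpha_j$ replaced by $-\alpha_j$. For $m\ge1$, $P_m(z;\{\alpha_j\}_{j=0}^{m-2},\beta)=z\Phi_{m-1}(z)-\bar\beta\Phi_{m-1}^*(z)$, $Q_m(z;\{\alpha_j\}_{j=0}^{m-2},\beta)=z\Psi_{m-1}(z)+\bar\beta\Psi_{m-1}^*(z)$, $C_m=\tfrac12(P_m+Q_m)$, $S_m=\tfrac12(P_m-Q_m)$. The identity is an identity of polynomials in $z,w$. *)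

theory Defs
  imports "HOL-Analysis.Analysis" "HOL-Computational_Algebra.Polynomial"
begin

text \<open>Reversed polynomial of degree (at most) k: z^k * conj(p(1/conj z)).\<close>
definition pstar :: "nat \<Rightarrow> complex poly \<Rightarrow> complex poly" where
  "pstar k p = (\<Sum>i\<le>k. monom (cnj (coeff p (k - i))) i)"

text \<open>Monic orthogonal polynomials via the Szego recursion.\<close>
fun Phi :: "(nat \<Rightarrow> complex) \<Rightarrow> nat \<Rightarrow> complex poly" where
  "Phi a 0 = 1"
| "Phi a (Suc k) = pCons 0 (Phi a k) - smult (cnj (a k)) (pstar k (Phi a k))"

definition Psi :: "(nat \<Rightarrow> complex) \<Rightarrow> nat \<Rightarrow> complex poly" where
  "Psi a k = Phi (\<lambda>j. - a j) k"

definition Pm :: "nat \<Rightarrow> (nat \<Rightarrow> complex) \<Rightarrow> complex \<Rightarrow> complex poly" where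
  "Pm m a \<beta> = pCons 0 (Phi a (m - 1)) - smult (cnj \<beta>) (pstar (m - 1) (Phi a (m - 1)))"

definition Qm :: "nat \<Rightarrow> (nat \<Rightarrow> complex) \<Rightarrow> complex \<Rightarrow> complex poly" where
  "Qm m a \<beta> = pCons 0 (Psi a (m - 1)) + smult (cnj \<beta>) (pstar (m - 1) (Psi a (m - 1)))"

definition Cm :: "nat \<Rightarrow> (nat \<Rightarrow> complex) \<Rightarrow> complex \<Rightarrow> complex poly" where
  "Cm m a \<beta> = smult (1/2) (Pm m a \<beta> + Qm m a \<beta>)"

definition Sm :: "nat \<Rightarrow> (nat \<Rightarrow> complex) \<Rightarrow> complex \<Rightarrow> complex poly" where
  "Sm m a \<beta> = smult (1/2) (Pm m a \<beta> - Qm m a \<beta>)"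

definition Gm :: "nat \<Rightarrow> (nat \<Rightarrow> complex) \<Rightarrow> complex \<Rightarrow> complex \<Rightarrow> complex \<Rightarrow> complex" where
  "Gm m a \<beta> z w = - \<i> * (poly (Cm m a \<beta>) z * w * poly (Sm m a \<beta>) w
                          - poly (Cm m a \<beta>) w * z * poly (Sm m a \<beta>) z) / (z - w)"

end

theory Submission
  imports Defs
begin

(*
  Evaluated at a point z, the Szego recursion acts on the pair (Phi_k(z), Phi_k^*(z)) by the
  linear transfer map (u, v) |-> (z u - conj(alpha_k) v, v - alpha_k z u), and P_m, Q_m are the
  first component of one more transfer step, with beta.  Replacing alpha by -alpha conjugates
  every step by diag(1, -1), so by linearity C_m(z) and S_m(z) are the images of the unit
  vectors (1, 0) and (0, 1) under the composite map.  Peeling off the first step (the one with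
  alpha_0) gives C_n = z (C_{n-1} - alpha_0 S_{n-1}) and S_n = S_{n-1} - conj(alpha_0) C_{n-1};
  inserting this into G_n, the cross terms cancel and the remaining ones carry the factor
  1 - |alpha_0|^2 = rho_0^2.
*)

lemma coeff_pstar: "coeff (pstar k p) i = (if i \<le> k then cnj (coeff p (k - i)) else 0)"
  by (simp add: pstar_def coeff_sum coeff_monom)

lemma degree_Phi_le: "degree (Phi a k) \<le> k"
proof (induction k)
  case 0
  then show ?case by simp
next
  case (Suc k)
  have "degree (pCons 0 (Phi a k)) \<le> Suc k"
    using Suc by (metis degree_pCons_le le_SucI not_less_eq_eq order_trans)
  moreover have "degree (pstar k (Phi a k)) \<le> Suc k"
    by (rule degree_le) (auto simp: coeff_pstar)
  ultimately show ?case
    by (simp add: degree_diff_le degree_smult_le order_trans)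
qed

lemma pstar_Suc_szego:
  assumes "degree p \<le> k"
  shows "pstar (Suc k) (pCons 0 p - smult (cnj c) (pstar k p)) = pstar k p - smult c (pCons 0 p)"
proof (rule poly_eqI)
  fix i
  show "coeff (pstar (Suc k) (pCons 0 p - smult (cnj c) (pstar k p))) i =
        coeff (pstar k p - smult c (pCons 0 p)) i"
  proof (cases "i \<le> Suc k")
    case True
    then show ?thesis
      by (cases i)
        (auto simp: coeff_pstar coeff_pCons Suc_diff_le split: nat.splits
          intro!: arg_cong[where f = "coeff p"])
  next
    case False
    then have "coeff p (i - 1) = 0"
      using assms by (intro coeff_eq_0) auto
    with False show ?thesis
      by (cases i) (auto simp: coeff_pstar coeff_pCons)
  qed
qed

definition szego_step :: "complex \<Rightarrow> complex \<Rightarrow> complex \<times> complex \<Rightarrow> complex \<times> complex" where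
  "szego_step c z s = (z * fst s - cnj c * snd s, snd s - c * z * fst s)"

fun szego_iter ::
  "(nat \<Rightarrow> complex) \<Rightarrow> nat \<Rightarrow> complex \<Rightarrow> complex \<times> complex \<Rightarrow> complex \<times> complex" where
  "szego_iter a 0 z s = s"
| "szego_iter a (Suc k) z s = szego_step (a k) z (szego_iter a k z s)"

lemma poly_Phi_pstar_szego_iter:
  "(poly (Phi a k) z, poly (pstar k (Phi a k)) z) = szego_iter a k z (1, 1)"
proof (induction k)
  case 0
  then show ?case by (simp add: pstar_def)
next
  case (Suc k)
  have "pstar (Suc k) (Phi a (Suc k)) = pstar k (Phi a k) - smult (a k) (pCons 0 (Phi a k))"
    using pstar_Suc_szego[OF degree_Phi_le] by simp
  with Suc show ?case
    by (simp add: szego_step_def flip: Suc.IH)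
qed

lemma szego_iter_uminus:
  "szego_iter (\<lambda>j. - a j) k z (u, v) =
     (fst (szego_iter a k z (u, - v)), - snd (szego_iter a k z (u, - v)))"
  by (induction k) (auto simp: szego_step_def)

lemma szego_iter_linear:
  "szego_iter a k z (u, v) =
     (u * fst (szego_iter a k z (1, 0)) + v * fst (szego_iter a k z (0, 1)),
      u * snd (szego_iter a k z (1, 0)) + v * snd (szego_iter a k z (0, 1)))"
  by (induction k) (auto simp: szego_step_def algebra_simps)

lemma szego_iter_Suc_shift:
  "szego_iter a (Suc k) z s = szego_iter (\<lambda>j. a (Suc j)) k z (szego_step (a 0) z s)"
  by (induction k) auto

definition szego_C :: "(nat \<Rightarrow> complex) \<Rightarrow> nat \<Rightarrow> complex \<Rightarrow> complex \<Rightarrow> complex" where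
  "szego_C a k \<beta> z = fst (szego_step \<beta> z (szego_iter a k z (1, 0)))"

definition szego_S :: "(nat \<Rightarrow> complex) \<Rightarrow> nat \<Rightarrow> complex \<Rightarrow> complex \<Rightarrow> complex" where
  "szego_S a k \<beta> z = fst (szego_step \<beta> z (szego_iter a k z (0, 1)))"

lemma fst_szego_step_szego_iter:
  "fst (szego_step \<beta> z (szego_iter a k z (u, v))) = u * szego_C a k \<beta> z + v * szego_S a k \<beta> z"
  unfolding szego_C_def szego_S_def szego_step_def
  by (simp add: szego_iter_linear[of a k z u v] algebra_simps)

lemma poly_Pm: "poly (Pm (Suc k) a \<beta>) z = szego_C a k \<beta> z + szego_S a k \<beta> z"
  using fst_szego_step_szego_iter[of \<beta> z a k 1 1]
  by (simp add: Pm_def szego_step_def flip: poly_Phi_pstar_szego_iter)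

lemma poly_Qm: "poly (Qm (Suc k) a \<beta>) z = szego_C a k \<beta> z - szego_S a k \<beta> z"
  using poly_Phi_pstar_szego_iter[of "\<lambda>j. - a j" k z] fst_szego_step_szego_iter[of \<beta> z a k 1 "-1"]
    szego_iter_uminus[of a k z 1 1]
  by (simp add: Qm_def Psi_def szego_step_def)

lemma poly_Cm: "poly (Cm (Suc k) a \<beta>) z = szego_C a k \<beta> z"
  by (simp add: Cm_def poly_Pm poly_Qm field_simps)

lemma poly_Sm: "poly (Sm (Suc k) a \<beta>) z = szego_S a k \<beta> z"
  by (simp add: Sm_def poly_Pm poly_Qm field_simps)

lemma szego_C_Suc:
  "szego_C a (Suc k) \<beta> z =
     z * (szego_C (\<lambda>j. a (Suc j)) k \<beta> z - a 0 * szego_S (\<lambda>j. a (Suc j)) k \<beta> z)"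
proof -
  have "szego_step (a 0) z (1, 0) = (z, - (a 0 * z))"
    by (simp add: szego_step_def)
  then show ?thesis
    unfolding szego_C_def[of a] szego_iter_Suc_shift
    by (simp add: fst_szego_step_szego_iter algebra_simps)
qed

lemma szego_S_Suc:
  "szego_S a (Suc k) \<beta> z =
     szego_S (\<lambda>j. a (Suc j)) k \<beta> z - cnj (a 0) * szego_C (\<lambda>j. a (Suc j)) k \<beta> z"
proof -
  have "szego_step (a 0) z (0, 1) = (- cnj (a 0), 1)"
    by (simp add: szego_step_def)
  then show ?thesis
    unfolding szego_S_def[of a] szego_iter_Suc_shift
    by (simp add: fst_szego_step_szego_iter)
qed

theorem lemma5p3:
  fixes n :: nat and \<alpha> :: "nat \<Rightarrow> complex" and \<beta> z w :: complex and \<rho>0 :: real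
  assumes "n \<ge> 2"
    and "norm \<beta> = 1"
    and "\<forall>j \<le> n - 2. norm (\<alpha> j) < 1"
    and "\<rho>0 = sqrt (1 - (norm (\<alpha> 0))\<^sup>2)"
    and "z \<noteq> w"
  shows "Gm n \<alpha> \<beta> z w =
           z * (complex_of_real \<rho>0)\<^sup>2 * Gm (n - 1) (\<lambda>j. \<alpha> (Suc j)) \<beta> z w
           - \<i> * (complex_of_real \<rho>0)\<^sup>2 * z * poly (Sm (n - 1) (\<lambda>j. \<alpha> (Suc j)) \<beta>) z
               * poly (Cm (n - 1) (\<lambda>j. \<alpha> (Suc j)) \<beta>) w"
proof -
  obtain k where n: "n = Suc (Suc k)"
    using assms(1) by (metis add_2_eq_Suc le_Suc_ex)
  have "norm (\<alpha> 0) < 1"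
    using assms(3) by auto
  then have "\<rho>0\<^sup>2 = 1 - (norm (\<alpha> 0))\<^sup>2"
    using assms(4) by (simp add: abs_square_le_1 less_imp_le)
  then have \<rho>0_sq: "(complex_of_real \<rho>0)\<^sup>2 = 1 - \<alpha> 0 * cnj (\<alpha> 0)"
    by (metis complex_norm_square of_real_1 of_real_diff of_real_power)
  have "z - w \<noteq> 0"
    using assms(5) by simp
  then show ?thesis
    unfolding n Gm_def \<rho>0_sq diff_Suc_1 poly_Cm poly_Sm szego_C_Suc szego_S_Suc
    by (simp add: field_simps)
qed

end
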